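(* Let $K\ge2$ and consider a rotation-invariant random point process on the discrete circle with holes $1,\dots,K$ (clockwise), with $\mathbb P(\text{particle at hole }K)>0$. Let $W$ be the smallest index $l\in\{1,\dots,K\}$ such that hole $l$ is occupied, $g(L)=\mathbb P(W=L)$, and $\Delta g(L)=g(L+1)-g(L)$ with $g(K+1)=0$. Then for every $L\in\{1,\dots,K\}$, $$-\Delta g(L)=\mathbb P\big(\text{there is a particle at hole }K\text{ and the clockwise distance from hole }K\text{ to the next occupied hole equals }L\big).$$
   Context: Adjacent holes are at distance 1; if hole $K$ is the only occupied hole, the distance to the next occupied hole is $K$. *)

theory Defs
  imports "HOL-Probability.Probability"
begin

text \<open>Holes of the discrete circle are 1,...,K (clockwise). A configuration is the
set of occupied holes. The hole at clockwise distance d from hole i is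
(i - 1 + d) mod K + 1.\<close>

definition hole_at :: "nat \<Rightarrow> nat \<Rightarrow> nat \<Rightarrow> nat" where
  "hole_at K i d = (i - 1 + d) mod K + 1"

definition rot :: "nat \<Rightarrow> nat set \<Rightarrow> nat set" where
  "rot K S = (\<lambda>i. hole_at K i 1) ` S"

definition rot_invariant_process :: "nat \<Rightarrow> nat set pmf \<Rightarrow> bool" where
  "rot_invariant_process K p \<longleftrightarrow>
     (\<forall>S \<in> set_pmf p. S \<subseteq> {1..K}) \<and> map_pmf (rot K) p = p"

text \<open>W: smallest occupied index (only meaningful for nonempty configurations).\<close>
definition first_occ :: "nat set \<Rightarrow> nat" where
  "first_occ S = Min S"

definition dist_next :: "nat \<Rightarrow> nat set \<Rightarrow> nat \<Rightarrow> nat" where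
  "dist_next K S i = (LEAST d. 1 \<le> d \<and> hole_at K i d \<in> S)"

definition gW :: "nat set pmf \<Rightarrow> nat \<Rightarrow> real" where
  "gW p L = measure_pmf.prob p {S. S \<noteq> {} \<and> first_occ S = L}"

end

theory Submission
  imports Defs
begin

text \<open>Rotating a configuration by one hole clockwise moves its first occupied hole from \<open>L\<close>
to \<open>L + 1\<close> exactly when hole \<open>K\<close> is empty (otherwise hole \<open>K\<close> lands on hole 1).
By rotation invariance, \<open>g(L + 1) = P(K empty, W = L)\<close>, hence
\<open>g(L) - g(L + 1) = P(K occupied, W = L)\<close>. When hole \<open>K\<close> is occupied, the hole at clockwise
distance \<open>d \<le> K\<close> from it is hole \<open>d\<close>, so the distance to the next occupied hole is \<open>W\<close>.\<close>

lemma measure_pmf_prob_cong: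
  assumes "\<And>x. x \<in> set_pmf p \<Longrightarrow> x \<in> A \<longleftrightarrow> x \<in> B"
  shows "measure_pmf.prob p A = measure_pmf.prob p B"
  by (rule measure_prob_cong_0) (use assms in \<open>auto simp: set_pmf_iff\<close>)

lemma hole_at_last:
  assumes "1 \<le> d" "d \<le> K"
  shows "hole_at K K d = d"
proof -
  have "K - 1 + d = (d - 1) + K" using assms by simp
  then have "(K - 1 + d) mod K = (d - 1) mod K" by (metis mod_add_self2)
  also have "\<dots> = d - 1" using assms by simp
  finally show ?thesis using assms by (simp add: hole_at_def)
qed

lemma hole_at_Suc: "1 \<le> i \<Longrightarrow> i < K \<Longrightarrow> hole_at K i 1 = Suc i"
  by (simp add: hole_at_def)

lemma dist_next_last_eq_Min:
  assumes "S \<subseteq> {1..K}" "K \<in> S"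
  shows "dist_next K S K = Min S"
proof -
  have fin: "finite S" using assms(1) finite_subset by blast
  have m: "Min S \<in> S" using fin assms(2) by (metis Min_in empty_iff)
  then have m_bounds: "1 \<le> Min S" "Min S \<le> K" using assms(1) by auto
  show ?thesis unfolding dist_next_def
  proof (rule Least_equality)
    show "1 \<le> Min S \<and> hole_at K K (Min S) \<in> S" using m m_bounds hole_at_last by simp
  next
    fix d assume d: "1 \<le> d \<and> hole_at K K d \<in> S"
    show "Min S \<le> d"
    proof (cases "d \<le> K")
      case True
      then have "d \<in> S" using d hole_at_last by metis
      then show ?thesis using fin by simp
    qed (use m_bounds in simp)
  qed
qed

lemma rot_eq_Suc_image:
  assumes "S \<subseteq> {1..K}" "K \<notin> S"
  shows "rot K S = Suc ` S"
proof -
  have "hole_at K i 1 = Suc i" if "i \<in> S" for i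
  proof -
    have "i \<in> {1..K}" "i \<noteq> K" using that assms by auto
    then show ?thesis by (intro hole_at_Suc) auto
  qed
  then show ?thesis unfolding rot_def by (auto simp: image_iff)
qed

lemma one_in_rot: "1 \<le> K \<Longrightarrow> K \<in> S \<Longrightarrow> 1 \<in> rot K S"
  unfolding rot_def using hole_at_last[of 1 K] by force

lemma Min_rot_eq_Suc_iff:
  assumes "S \<subseteq> {1..K}" "1 \<le> L"
  shows "(rot K S \<noteq> {} \<and> Min (rot K S) = L + 1) \<longleftrightarrow> (K \<notin> S \<and> S \<noteq> {} \<and> Min S = L)"
proof -
  have fin: "finite S" using assms(1) finite_subset by blast
  show ?thesis
  proof (cases "K \<in> S")
    case True
    then have "1 \<in> rot K S" using assms(1) by (intro one_in_rot) auto
    moreover have "finite (rot K S)" using fin unfolding rot_def by simp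
    ultimately have "Min (rot K S) \<le> 1" by simp
    then show ?thesis using True assms(2) by auto
  next
    case False
    then have rot: "rot K S = Suc ` S" using rot_eq_Suc_image[OF assms(1)] by simp
    show ?thesis
    proof (cases "S = {}")
      case nonempty: False
      then have "Min (Suc ` S) = Suc (Min S)"
        using fin by (simp add: mono_Min_commute[symmetric] mono_def)
      then show ?thesis using rot nonempty False by simp
    qed (use rot in simp)
  qed
qed

lemma gW_Suc_rot_invariant:
  assumes "rot_invariant_process K p" "1 \<le> L"
  shows "gW p (L + 1) = measure_pmf.prob p {S. K \<notin> S \<and> S \<noteq> {} \<and> Min S = L}"
proof -
  have "gW p (L + 1) = measure_pmf.prob (map_pmf (rot K) p) {S. S \<noteq> {} \<and> Min S = L + 1}"
    using assms(1) by (simp add: gW_def first_occ_def rot_invariant_process_def)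
  also have "\<dots> = measure_pmf.prob p {S. rot K S \<noteq> {} \<and> Min (rot K S) = L + 1}"
    by (simp add: vimage_def)
  also have "\<dots> = measure_pmf.prob p {S. K \<notin> S \<and> S \<noteq> {} \<and> Min S = L}"
    using assms Min_rot_eq_Suc_iff
    by (intro measure_pmf_prob_cong) (auto simp: rot_invariant_process_def)
  finally show ?thesis .
qed

lemma gW_split_last:
  "gW p L = measure_pmf.prob p {S. K \<in> S \<and> Min S = L}
          + measure_pmf.prob p {S. K \<notin> S \<and> S \<noteq> {} \<and> Min S = L}"
proof -
  have "{S. S \<noteq> {} \<and> first_occ S = L}
        = {S. K \<in> S \<and> Min S = L} \<union> {S. K \<notin> S \<and> S \<noteq> {} \<and> Min S = L}"
    by (auto simp: first_occ_def)
  then show ?thesis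
    unfolding gW_def by (simp add: measure_pmf.finite_measure_Union disjoint_iff)
qed

theorem lemma4p3:
  fixes K :: nat and p :: "nat set pmf"
  assumes "K \<ge> 2"
    and "rot_invariant_process K p"
    and "measure_pmf.prob p {S. K \<in> S} > 0"
    and "L \<in> {1..K}"
  shows "- (gW p (L + 1) - gW p L)
           = measure_pmf.prob p {S. K \<in> S \<and> dist_next K S K = L}"
proof -
  have "measure_pmf.prob p {S. K \<in> S \<and> dist_next K S K = L}
        = measure_pmf.prob p {S. K \<in> S \<and> Min S = L}"
    using assms(2) dist_next_last_eq_Min
    by (intro measure_pmf_prob_cong) (auto simp: rot_invariant_process_def)
  then show ?thesis
    using gW_Suc_rot_invariant[OF assms(2)] gW_split_last[of p L K] assms(4) by simp
qed

end
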